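(* Let $(X,Z,A)$ be as in the context, and let $Q(\cdot\mid X)$ be any conditional cumulative distribution function (the target distribution). Define $Z_Q := Q^{-1}\big(\Pi(Z\mid X)\mid X\big)$. Then, conditionally on $X$, $Z_Q$ has distribution $Q(\cdot\mid X)$. Moreover, under the monotonicity assumption (for all $z'>z$, $A^{z'}\ge A^{z}$ with probability 1): if $Q$ stochastically dominates $\Pi$, i.e. $\Pi(z\mid X)\ge Q(z\mid X)$ for all $z\in\mathbb{R}$, then $P[A^{Z_Q}\ge A]=1$; and if $Q$ is stochastically dominated by $\Pi$ (i.e. $\Pi(z\mid X)\le Q(z\mid X)$ for all $z$), then $P[A^{Z_Q}\le A]=1$.
   Context: Observed data $O=(X,Z,A,Y)\sim P$ with covariates $X\in\mathbb{R}^d$, a continuous instrument $Z\in\mathbb{R}$ having conditional density $\pi(z\mid X)$ and conditional CDF $\Pi(z\mid X)=P(Z\le z\mid X)$, binary treatment $A\in\{0,1\}$ and outcome $Y\in\mathbb{R}$. $A^z$ denotes the potential treatment had the instrument been set to $z$; for a random instrument value $W$ (such as $Z_Q$), $A^{W}$ denotes $A^z$ evaluated at $z=W$. Consistency is assumed: $A^Z=A$. For a conditional CDF $Q(\cdot\mid X)$, $Q^{-1}(p\mid X)=\inf\{z: Q(z\mid X)\ge p\}$ is the quantile function. *)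

theory Defs
  imports "HOL-Probability.Probability"
begin

definition cond_quantile :: "(real \<Rightarrow> 'x \<Rightarrow> real) \<Rightarrow> real \<Rightarrow> 'x \<Rightarrow> real" where
  "cond_quantile Q p x = Inf {z. p \<le> Q z x}"

definition is_cond_cdf :: "(real \<Rightarrow> 'x \<Rightarrow> real) \<Rightarrow> 'x measure \<Rightarrow> bool" where
  "is_cond_cdf Q N \<longleftrightarrow>
     (\<forall>z. (\<lambda>x. Q z x) \<in> borel_measurable N) \<and>
     (\<forall>x. mono (\<lambda>z. Q z x)) \<and>
     (\<forall>x z. continuous (at_right z) (\<lambda>z. Q z x)) \<and>
     (\<forall>x. ((\<lambda>z. Q z x) \<longlongrightarrow> 0) at_bot) \<and>
     (\<forall>x. ((\<lambda>z. Q z x) \<longlongrightarrow> 1) at_top)"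

end

theory Submission
  imports Defs
begin

text \<open>
  Given \<open>X = x\<close>, the instrument \<open>Z\<close> has an atomless law with CDF \<open>\<Pi>(\<cdot> | x)\<close>. By the
  probability integral transform, \<open>U = \<Pi>(Z | X)\<close> lies in \<open>(0, 1)\<close> almost surely and
  \<open>P(U \<le> Q(z | X), X \<in> B) = E[1\<^sub>B(X) Q(z | X)]\<close>. For \<open>0 < u < 1\<close> the quantile function
  satisfies \<open>Q\<^sup>-\<^sup>1(u | x) \<le> z \<longleftrightarrow> u \<le> Q(z | x)\<close>, which turns this into the law of \<open>Z\<^sub>Q\<close>.
  If \<open>\<Pi> \<le> Q\<close>, the same equivalence at \<open>z = Z\<close> gives \<open>Z\<^sub>Q \<le> Z\<close>. If \<open>Q \<le> \<Pi>\<close>, use that almost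
  surely \<open>\<Pi>(\<cdot> | X)\<close> is not flat just left of \<open>Z\<close>, i.e. \<open>\<Pi>(r | X) < U\<close> for \<open>r < Z\<close>; then
  \<open>Z\<^sub>Q < Z\<close> would give \<open>U \<le> Q(Z\<^sub>Q | X) \<le> \<Pi>(Z\<^sub>Q | X) < U\<close>. Monotonicity of \<open>z \<mapsto> A\<^sup>z\<close> and
  consistency \<open>A\<^sup>Z = A\<close> turn \<open>Z \<le> Z\<^sub>Q\<close> and \<open>Z\<^sub>Q \<le> Z\<close> into the two claims.
\<close>

lemma cInf_superlevel_le_iff:
  fixes G :: "real \<Rightarrow> real"
  assumes mono: "mono G" and right_cont: "\<And>z. continuous (at_right z) G"
    and nonempty: "\<exists>w. u \<le> G w" and bdd: "bdd_below {w. u \<le> G w}"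
  shows "Inf {w. u \<le> G w} \<le> z \<longleftrightarrow> u \<le> G z"
proof
  let ?s = "Inf {w. u \<le> G w}"
  have above: "u \<le> G t" if "?s < t" for t
  proof -
    obtain w where "u \<le> G w" "w < t"
      using \<open>?s < t\<close> cInf_less_iff[OF _ bdd] nonempty by auto
    then show ?thesis
      using mono by (meson monoD less_imp_le order_trans)
  qed
  have "u \<le> G ?s"
  proof (rule tendsto_lowerbound)
    show "(G \<longlongrightarrow> G ?s) (at_right ?s)"
      using right_cont by (simp add: continuous_within)
    show "eventually (\<lambda>t. u \<le> G t) (at_right ?s)"
      by (auto simp: eventually_at_filter intro!: always_eventually above)
  qed simp
  then show "u \<le> G z" if "?s \<le> z"
    using mono that by (meson monoD order_trans)
  show "?s \<le> z" if "u \<le> G z"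
    using bdd that by (auto intro: cInf_lower)
qed

lemma is_cond_cdf_bounded:
  assumes "is_cond_cdf Q N"
  shows "0 \<le> Q z x" and "Q z x \<le> 1"
proof -
  have mono: "mono (\<lambda>z. Q z x)"
    and "((\<lambda>z. Q z x) \<longlongrightarrow> 0) at_bot" "((\<lambda>z. Q z x) \<longlongrightarrow> 1) at_top"
    using assms by (auto simp: is_cond_cdf_def)
  show "0 \<le> Q z x"
    by (rule tendsto_upperbound[OF \<open>((\<lambda>z. Q z x) \<longlongrightarrow> 0) at_bot\<close>])
       (use mono in \<open>auto simp: eventually_at_bot_linorder intro: monoD\<close>)
  show "Q z x \<le> 1"
    by (rule tendsto_lowerbound[OF \<open>((\<lambda>z. Q z x) \<longlongrightarrow> 1) at_top\<close>])
       (use mono in \<open>auto simp: eventually_at_top_linorder intro: monoD\<close>)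
qed

lemma cond_quantile_le_iff:
  assumes Q: "is_cond_cdf Q N" and u: "0 < u" "\<exists>w. u \<le> Q w x"
  shows "cond_quantile Q u x \<le> z \<longleftrightarrow> u \<le> Q z x"
  unfolding cond_quantile_def
proof (rule cInf_superlevel_le_iff)
  show "mono (\<lambda>z. Q z x)" "\<And>z. continuous (at_right z) (\<lambda>z. Q z x)"
    using Q by (auto simp: is_cond_cdf_def)
  have "eventually (\<lambda>w. Q w x < u) at_bot"
    using Q u(1) order_tendstoD(2) by (fastforce simp: is_cond_cdf_def)
  then obtain b where "\<And>w. w \<le> b \<Longrightarrow> Q w x < u"
    by (auto simp: eventually_at_bot_linorder)
  then show "bdd_below {w. u \<le> Q w x}"
    by (metis (mono_tags) bdd_belowI mem_Collect_eq not_le less_imp_le)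
qed (use u in auto)

lemma is_cond_cdf_ex_ge:
  assumes "is_cond_cdf Q N" and "u < 1"
  shows "\<exists>w. u \<le> Q w x"
proof -
  have "eventually (\<lambda>w. u < Q w x) at_top"
    using assms order_tendstoD(1) by (fastforce simp: is_cond_cdf_def)
  then show ?thesis
    by (meson eventually_happens' less_imp_le trivial_limit_at_top_linorder)
qed

lemma measurable_cond_quantile[measurable (raw)]:
  assumes Q: "is_cond_cdf Q N"
    and [measurable]: "f \<in> borel_measurable M" "g \<in> measurable M N"
  shows "(\<lambda>\<omega>. cond_quantile Q (f \<omega>) (g \<omega>)) \<in> borel_measurable M"
proof (rule borel_measurableI_le)
  fix a
  have [measurable]: "\<And>z. (\<lambda>x. Q z x) \<in> borel_measurable N"
    using Q by (simp add: is_cond_cdf_def)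
  \<comment> \<open>\<open>Inf UNIV\<close> and \<open>Inf {}\<close> are the junk values for \<open>u \<le> 0\<close> and for levels never reached\<close>
  have cases: "cond_quantile Q u x \<le> a \<longleftrightarrow>
      (u \<le> 0 \<and> Inf UNIV \<le> a) \<or>
      (0 < u \<and> (\<forall>n::nat. Q (real n) x < u) \<and> Inf {} \<le> a) \<or>
      (0 < u \<and> (\<exists>n::nat. u \<le> Q (real n) x) \<and> u \<le> Q a x)" for u x
  proof -
    have reach: "(\<exists>w. u \<le> Q w x) \<longleftrightarrow> (\<exists>n::nat. u \<le> Q (real n) x)"
      using Q real_arch_simple unfolding is_cond_cdf_def by (meson monoD order_trans)
    show ?thesis
    proof (cases "u \<le> 0")
      case True
      then have "{w. u \<le> Q w x} = UNIV"
        using is_cond_cdf_bounded[OF Q] order_trans by blast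
      with True reach show ?thesis
        by (auto simp: cond_quantile_def not_less intro: order_trans is_cond_cdf_bounded[OF Q])
    next
      case False
      show ?thesis
      proof (cases "\<exists>w. u \<le> Q w x")
        case True
        with False reach show ?thesis
          using cond_quantile_le_iff[OF Q, of u x a] by (meson not_le)
      next
        case unreachable: False
        then have empty: "{w. u \<le> Q w x} = {}" by auto
        from False reach unreachable show ?thesis
          unfolding cond_quantile_def empty by (fastforce simp: not_le)
      qed
    qed
  qed
  show "{\<omega> \<in> space M. cond_quantile Q (f \<omega>) (g \<omega>) \<le> a} \<in> sets M"
    unfolding cases by measurable
qed

context real_distribution
begin

lemma measure_cdf_le:
  assumes atomless: "\<And>x. measure M {x} = 0" and q: "0 \<le> q" "q \<le> 1"
  shows "measure M {t. cdf M t \<le> q} = q"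
proof (cases "q = 1")
  case True
  then have "{t. cdf M t \<le> q} = UNIV" using cdf_bounded_prob by auto
  then show ?thesis using True prob_space by simp
next
  case False
  let ?S = "{t. cdf M t \<le> q}"
  have "eventually (\<lambda>t. q < cdf M t) at_top"
    using cdf_lim_at_top_prob q False order_tendstoD(1) by fastforce
  then obtain b where b: "\<And>t. b \<le> t \<Longrightarrow> q < cdf M t"
    by (auto simp: eventually_at_top_linorder)
  have bdd: "bdd_above ?S"
    by (rule bdd_aboveI[of _ b]) (metis b mem_Collect_eq not_le less_imp_le)
  show ?thesis
  proof (cases "?S = {}")
    case True
    have "\<not> 0 < q"
    proof
      assume "0 < q"
      then have "eventually (\<lambda>t. cdf M t < q) at_bot"
        using cdf_lim_at_bot order_tendstoD(2) by blast
      with True show False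
        unfolding eventually_at_bot_linorder by (metis empty_iff mem_Collect_eq less_imp_le order_refl)
    qed
    with True q show ?thesis by simp
  next
    case False
    have "closed ?S"
      using isCont_cdf atomless
      by (intro closed_Collect_le) (auto intro: continuous_at_imp_continuous_on)
    then have "Sup ?S \<in> ?S"
      using closed_contains_Sup[OF False bdd] by blast
    then have S_eq: "?S = {..Sup ?S}"
      using bdd cdf_nondecreasing by (auto intro: cSup_upper order_trans)
    then have above: "\<And>t. Sup ?S < t \<Longrightarrow> q < cdf M t"
      by (metis atMost_iff mem_Collect_eq not_le)
    have "q \<le> cdf M (Sup ?S)"
    proof (rule tendsto_lowerbound)
      show "(cdf M \<longlongrightarrow> cdf M (Sup ?S)) (at_right (Sup ?S))"
        using cdf_is_right_cont by (simp add: continuous_within)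
      show "eventually (\<lambda>t. q \<le> cdf M t) (at_right (Sup ?S))"
        by (auto simp: eventually_at_filter intro!: always_eventually less_imp_le above)
    qed simp
    with \<open>Sup ?S \<in> ?S\<close> have "cdf M (Sup ?S) = q" by simp
    then show ?thesis by (subst S_eq) (simp add: cdf_def)
  qed
qed

lemma borel_measurable_cdf[measurable]: "cdf M \<in> borel_measurable borel"
  by (intro borel_measurable_mono) (simp add: mono_def cdf_nondecreasing)

lemma AE_less_imp_cdf_less:
  assumes atomless: "\<And>x. measure M {x} = 0"
  shows "AE t in M. r < t \<longrightarrow> cdf M r < cdf M t"
proof (rule AE_I')
  let ?N = "{t. r < t \<and> cdf M t \<le> cdf M r}"
  have "?N = {t. cdf M t \<le> cdf M r} - {..r}"
    by (auto intro: cdf_nondecreasing order_antisym)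
  then have "measure M ?N = measure M {t. cdf M t \<le> cdf M r} - measure M {..r}"
    by (simp add: finite_measure_Diff cdf_nondecreasing subset_eq)
  also have "\<dots> = 0"
    using measure_cdf_le[OF atomless cdf_nonneg cdf_bounded_prob, of r] by (simp add: cdf_def)
  finally show "?N \<in> null_sets M"
    by (simp add: measure_le_0_iff null_sets_def emeasure_eq_measure)
qed (auto simp: not_less)

lemma AE_cdf_pos:
  assumes atomless: "\<And>x. measure M {x} = 0"
  shows "AE t in M. 0 < cdf M t"
proof (rule AE_I')
  show "{t. cdf M t \<le> 0} \<in> null_sets M"
    using measure_cdf_le[OF atomless, of 0] by (simp add: null_sets_def emeasure_eq_measure)
qed (auto simp: not_less)

lemma AE_cdf_less_1:
  assumes atomless: "\<And>x. measure M {x} = 0"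
  shows "AE t in M. cdf M t < 1"
proof (cases "\<exists>t. 1 \<le> cdf M t")
  case True
  let ?W = "{t. 1 \<le> cdf M t}"
  have "eventually (\<lambda>t. cdf M t < 1) at_bot"
    using cdf_lim_at_bot order_tendstoD(2) by fastforce
  then obtain b where b: "\<And>t. t \<le> b \<Longrightarrow> cdf M t < 1"
    by (auto simp: eventually_at_bot_linorder)
  have bdd: "bdd_below ?W"
    by (rule bdd_belowI[of _ b]) (metis b mem_Collect_eq not_le less_imp_le)
  have "closed ?W"
    using isCont_cdf atomless
    by (intro closed_Collect_le) (auto intro: continuous_at_imp_continuous_on)
  then have W: "1 \<le> cdf M (Inf ?W)"
    using closed_contains_Inf[OF _ bdd] True by auto
  have "AE t in M. t \<noteq> Inf ?W"
    by (rule AE_I'[of "{Inf ?W}"]) (auto simp: null_sets_def emeasure_eq_measure atomless)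
  with AE_less_imp_cdf_less[OF atomless, of "Inf ?W"] show ?thesis
  proof eventually_elim
    case (elim t)
    show ?case
    proof (rule ccontr)
      assume "\<not> cdf M t < 1"
      then have "Inf ?W \<le> t"
        using bdd by (auto intro: cInf_lower)
      with elim have "cdf M (Inf ?W) < cdf M t"
        by (auto simp: order_le_less)
      then show False
        using W cdf_bounded_prob[of t] by simp
    qed
  qed
qed (auto simp: not_le)

end

lemma borel_measurable_lborel_nn_integral:
  fixes f :: "'b \<Rightarrow> real \<Rightarrow> ennreal"
  assumes "case_prod f \<in> borel_measurable (N \<Otimes>\<^sub>M borel)"
  shows "(\<lambda>y. \<integral>\<^sup>+ t. f y t \<partial>lborel) \<in> borel_measurable N"
  by (rule lborel.borel_measurable_nn_integral)
     (use assms in \<open>simp add: measurable_cong_sets[OF sets_pair_measure_cong[OF refl sets_lborel] refl]\<close>)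

lemma sets_Collect_pair_borel:
  assumes "Measurable.pred (borel \<Otimes>\<^sub>M borel) (\<lambda>(t, x). P t x)"
  shows "{(t, x). P t x} \<in> sets (borel \<Otimes>\<^sub>M borel)"
proof -
  have "{p \<in> space (borel \<Otimes>\<^sub>M borel). (\<lambda>(t, x). P t x) p} \<in> sets (borel \<Otimes>\<^sub>M borel)"
    using assms by measurable
  then show ?thesis
    by (simp add: space_pair_measure)
qed

lemma (in prob_space) nn_integral_one_minus:
  assumes "f \<in> borel_measurable M" and "\<And>x. f x \<le> 1"
  shows "(\<integral>\<^sup>+ x. 1 - f x \<partial>M) = 1 - (\<integral>\<^sup>+ x. f x \<partial>M)"
proof -
  have "(\<integral>\<^sup>+ x. f x \<partial>M) \<le> 1"
    using nn_integral_mono[of M f "\<lambda>_. 1"] assms(2) by (simp add: emeasure_space_1)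
  then have "(\<integral>\<^sup>+ x. f x \<partial>M) \<noteq> \<infinity>"
    by (auto simp: top_unique)
  then show ?thesis
    using nn_integral_diff[of "\<lambda>_. 1" M f] assms by (simp add: emeasure_space_1)
qed

locale conditional_density = prob_space M
  for M :: "'a measure" and X :: "'a \<Rightarrow> 'b::topological_space" and Z :: "'a \<Rightarrow> real"
    and \<pi> :: "real \<Rightarrow> 'b \<Rightarrow> real" +
  assumes X_measurable: "X \<in> borel_measurable M"
    and Z_measurable: "Z \<in> borel_measurable M"
    and density_measurable: "(\<lambda>(t, x). \<pi> t x) \<in> borel_measurable (borel \<Otimes>\<^sub>M borel)"
    and density_nonneg: "\<And>t x. 0 \<le> \<pi> t x"
    and density_normalized: "\<And>x. (\<integral>\<^sup>+ t. ennreal (\<pi> t x) \<partial>lborel) = 1"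
    and emeasure_rectangle: "\<And>C B. C \<in> sets borel \<Longrightarrow> B \<in> sets borel \<Longrightarrow>
        emeasure M {\<omega> \<in> space M. Z \<omega> \<in> C \<and> X \<omega> \<in> B}
        = (\<integral>\<^sup>+ \<omega>. indicator B (X \<omega>) *
              (\<integral>\<^sup>+ t. indicator C t * ennreal (\<pi> t (X \<omega>)) \<partial>lborel) \<partial>M)"
begin

declare X_measurable[measurable] Z_measurable[measurable]

lemma measurable_density[measurable (raw)]:
  assumes "f \<in> borel_measurable N" "g \<in> borel_measurable N"
  shows "(\<lambda>y. \<pi> (f y) (g y)) \<in> borel_measurable N"
  using measurable_compose[OF measurable_Pair[OF assms] density_measurable] by simp

definition cond_law :: "'b \<Rightarrow> real measure" where
  "cond_law x = density lborel (\<lambda>t. ennreal (\<pi> t x))"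

definition cond_cdf :: "real \<Rightarrow> 'b \<Rightarrow> real" where
  "cond_cdf z x = cdf (cond_law x) z"

lemma sets_cond_law[simp, measurable_cong]: "sets (cond_law x) = sets borel"
  by (simp add: cond_law_def)

lemma space_cond_law[simp]: "space (cond_law x) = UNIV"
  by (simp add: cond_law_def)

lemma emeasure_cond_law:
  assumes "A \<in> sets borel"
  shows "emeasure (cond_law x) A = (\<integral>\<^sup>+ t. indicator A t * ennreal (\<pi> t x) \<partial>lborel)"
  using assms by (simp add: cond_law_def emeasure_density mult.commute)

lemma prob_space_cond_law: "prob_space (cond_law x)"
  by (rule prob_spaceI) (use emeasure_cond_law[of UNIV x] in \<open>simp add: density_normalized\<close>)

lemma real_distribution_cond_law: "real_distribution (cond_law x)"
  by (simp add: real_distribution_def real_distribution_axioms_def prob_space_cond_law)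

lemma cond_law_atomless: "measure (cond_law x) {t} = 0"
  by (simp add: measure_def emeasure_cond_law mult.commute[of "indicator _ _ :: ennreal"])

lemma cond_cdf_eq_set_integral: "cond_cdf z x = (LBINT t:{..z}. \<pi> t x)"
proof -
  have "integrable lborel (\<lambda>t. \<pi> t x)"
    using density_normalized
    by (intro integrableI_nn_integral_finite[where x=1]) (auto simp: density_nonneg)
  then have integrable: "integrable lborel (\<lambda>t. indicator {..z} t *\<^sub>R \<pi> t x)"
    by (rule integrable_mult_indicator[rotated]) simp
  have "cond_cdf z x = enn2real (\<integral>\<^sup>+ t. ennreal (indicator {..z} t *\<^sub>R \<pi> t x) \<partial>lborel)"
    unfolding cond_cdf_def cdf_def measure_def emeasure_cond_law[OF atMost_borel]
    by (intro arg_cong[where f=enn2real] nn_integral_cong) (simp add: indicator_def)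
  also have "\<dots> = (LBINT t:{..z}. \<pi> t x)"
    unfolding set_lebesgue_integral_def
    by (subst nn_integral_eq_integral[OF integrable]) (auto simp: density_nonneg)
  finally show ?thesis .
qed

lemma measurable_cond_cdf[measurable (raw)]:
  assumes "f \<in> borel_measurable N" "g \<in> borel_measurable N"
  shows "(\<lambda>y. cond_cdf (f y) (g y)) \<in> borel_measurable N"
proof -
  have "case_prod cond_cdf =
      (\<lambda>(t, x). enn2real (\<integral>\<^sup>+ s. indicator {..t} s * ennreal (\<pi> s x) \<partial>lborel))"
    by (simp add: fun_eq_iff cond_cdf_def cdf_def measure_def emeasure_cond_law)
  also have "\<dots> \<in> borel_measurable (borel \<Otimes>\<^sub>M borel)"
    unfolding case_prod_beta
    by (intro borel_measurable_enn2real borel_measurable_lborel_nn_integral)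
       (simp add: indicator_def, measurable)
  finally have "case_prod cond_cdf \<in> borel_measurable (borel \<Otimes>\<^sub>M borel)" .
  from measurable_compose[OF measurable_Pair[OF assms] this] show ?thesis
    by simp
qed

lemma emeasure_cond_law_section:
  assumes "S \<in> sets (borel \<Otimes>\<^sub>M borel)"
  shows "emeasure (cond_law x) {t. (t, x) \<in> S} = (\<integral>\<^sup>+ t. indicator S (t, x) * ennreal (\<pi> t x) \<partial>lborel)"
proof -
  have "{t. (t, x) \<in> S} \<in> sets borel"
    using sets_Pair2[OF assms] by (simp add: vimage_def)
  then show ?thesis
    by (simp add: emeasure_cond_law indicator_def)
qed

lemma measurable_emeasure_cond_law_section:
  assumes [measurable]: "S \<in> sets (borel \<Otimes>\<^sub>M borel)"
  shows "(\<lambda>x. emeasure (cond_law x) {t. (t, x) \<in> S}) \<in> borel_measurable borel"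
  unfolding emeasure_cond_law_section[OF assms]
  by (rule borel_measurable_lborel_nn_integral) measurable

lemma emeasure_cond_law_section_compl:
  assumes "S \<in> sets (borel \<Otimes>\<^sub>M borel)"
  shows "emeasure (cond_law x) {t. (t, x) \<notin> S} = 1 - emeasure (cond_law x) {t. (t, x) \<in> S}"
proof -
  have "{t. (t, x) \<in> S} \<in> sets (cond_law x)"
    using sets_Pair2[OF assms] by (simp add: vimage_def)
  then show ?thesis
    using emeasure_compl[of "{t. (t, x) \<in> S}" "cond_law x"]
      prob_space.emeasure_space_1[OF prob_space_cond_law]
      finite_measure.emeasure_finite[OF prob_space.finite_measure[OF prob_space_cond_law]]
    by (simp add: set_diff_eq)
qed

lemma suminf_emeasure_cond_law_section:
  assumes "disjoint_family A" and "\<And>i. A i \<in> sets (borel \<Otimes>\<^sub>M borel)"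
  shows "(\<Sum>i. emeasure (cond_law x) {t. (t, x) \<in> A i}) = emeasure (cond_law x) {t. (t, x) \<in> (\<Union>i. A i)}"
proof -
  have "range (\<lambda>i. {t. (t, x) \<in> A i}) \<subseteq> sets (cond_law x)"
    using sets_Pair2[OF assms(2)] by (auto simp: vimage_def)
  moreover have "disjoint_family (\<lambda>i. {t. (t, x) \<in> A i})"
    using assms(1) by (auto simp: disjoint_family_on_def)
  ultimately show ?thesis
    by (subst suminf_emeasure) (auto intro: arg_cong[where f = "emeasure _"])
qed

lemma emeasure_joint_Times:
  assumes "C \<in> sets borel" "B \<in> sets borel"
  shows "emeasure M {\<omega> \<in> space M. (Z \<omega>, X \<omega>) \<in> C \<times> B}
    = (\<integral>\<^sup>+ \<omega>. emeasure (cond_law (X \<omega>)) {t. (t, X \<omega>) \<in> C \<times> B} \<partial>M)"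
proof -
  have "emeasure (cond_law x) {t. (t, x) \<in> C \<times> B} = indicator B x * emeasure (cond_law x) C" for x
    by (cases "x \<in> B") simp_all
  then show ?thesis
    using emeasure_rectangle[OF assms] assms(1) by (simp add: emeasure_cond_law)
qed

lemma emeasure_joint:
  assumes "S \<in> sets (borel \<Otimes>\<^sub>M borel)"
  shows "emeasure M {\<omega> \<in> space M. (Z \<omega>, X \<omega>) \<in> S}
    = (\<integral>\<^sup>+ \<omega>. emeasure (cond_law (X \<omega>)) {t. (t, X \<omega>) \<in> S} \<partial>M)"
  using Int_stable_pair_measure_generator pair_measure_closed assms
  unfolding sets_pair_measure
proof (induct rule: sigma_sets_induct_disjoint)
  case (basic A)
  then obtain C B where "A = C \<times> B" "C \<in> sets borel" "B \<in> sets borel"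
    by auto
  then show ?case
    by (simp only: emeasure_joint_Times)
next
  case empty
  then show ?case by simp
next
  case (compl A)
  then have A[measurable]: "A \<in> sets (borel \<Otimes>\<^sub>M borel)"
    by (simp add: sets_pair_measure)
  have [measurable]: "{\<omega> \<in> space M. (Z \<omega>, X \<omega>) \<in> A} \<in> sets M"
    by measurable
  have "{\<omega> \<in> space M. (Z \<omega>, X \<omega>) \<in> space borel \<times> space borel - A}
      = space M - {\<omega> \<in> space M. (Z \<omega>, X \<omega>) \<in> A}"
    by auto
  then have "emeasure M {\<omega> \<in> space M. (Z \<omega>, X \<omega>) \<in> space borel \<times> space borel - A}
      = 1 - emeasure M {\<omega> \<in> space M. (Z \<omega>, X \<omega>) \<in> A}"
    by (simp add: emeasure_compl emeasure_space_1)
  also have "\<dots> = 1 - (\<integral>\<^sup>+ \<omega>. emeasure (cond_law (X \<omega>)) {t. (t, X \<omega>) \<in> A} \<partial>M)"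
    using compl(2) by simp
  also have "\<dots> = (\<integral>\<^sup>+ \<omega>. 1 - emeasure (cond_law (X \<omega>)) {t. (t, X \<omega>) \<in> A} \<partial>M)"
    by (intro nn_integral_one_minus[symmetric] prob_space.emeasure_le_1[OF prob_space_cond_law]
        measurable_compose[OF X_measurable measurable_emeasure_cond_law_section[OF A]])
  finally show ?case
    by (simp add: emeasure_cond_law_section_compl[OF A])
next
  case (union A)
  then have A[measurable]: "\<And>i. A i \<in> sets (borel \<Otimes>\<^sub>M borel)"
    by (auto simp: sets_pair_measure)
  have "emeasure M {\<omega> \<in> space M. (Z \<omega>, X \<omega>) \<in> (\<Union>i. A i)}
      = emeasure M (\<Union>i. {\<omega> \<in> space M. (Z \<omega>, X \<omega>) \<in> A i})"
    by (auto intro: arg_cong[where f = "emeasure M"])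
  also have "\<dots> = (\<Sum>i. emeasure M {\<omega> \<in> space M. (Z \<omega>, X \<omega>) \<in> A i})"
    using union(1) by (intro suminf_emeasure[symmetric]) (auto simp: disjoint_family_on_def)
  also have "\<dots> = (\<Sum>i. \<integral>\<^sup>+ \<omega>. emeasure (cond_law (X \<omega>)) {t. (t, X \<omega>) \<in> A i} \<partial>M)"
    using union(3) by simp
  also have "\<dots> = (\<integral>\<^sup>+ \<omega>. (\<Sum>i. emeasure (cond_law (X \<omega>)) {t. (t, X \<omega>) \<in> A i}) \<partial>M)"
    by (intro nn_integral_suminf[symmetric] measurable_compose[OF X_measurable]
        measurable_emeasure_cond_law_section A)
  also have "\<dots> = (\<integral>\<^sup>+ \<omega>. emeasure (cond_law (X \<omega>)) {t. (t, X \<omega>) \<in> (\<Union>i. A i)} \<partial>M)"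
    using suminf_emeasure_cond_law_section[OF union(1) A] by simp
  finally show ?case .
qed

lemma AE_joint:
  assumes [measurable]: "Measurable.pred (borel \<Otimes>\<^sub>M borel) (\<lambda>(t, x). P t x)"
    and AE_cond_law: "\<And>x. AE t in cond_law x. P t x"
  shows "AE \<omega> in M. P (Z \<omega>) (X \<omega>)"
proof (rule AE_I')
  let ?S = "{(t, x). \<not> P t x}"
  have S[measurable]: "?S \<in> sets (borel \<Otimes>\<^sub>M borel)"
    by (rule sets_Collect_pair_borel) measurable
  have "emeasure (cond_law x) {t. (t, x) \<in> ?S} = 0" for x
    using AE_cond_law[of x] sets_Pair2[OF S, of x]
    by (simp add: AE_iff_null vimage_def null_sets_def)
  then have "emeasure M {\<omega> \<in> space M. (Z \<omega>, X \<omega>) \<in> ?S} = 0"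
    unfolding emeasure_joint[OF S] by simp
  then show "{\<omega> \<in> space M. (Z \<omega>, X \<omega>) \<in> ?S} \<in> null_sets M"
    by (intro null_setsI) measurable
qed auto

lemma measure_joint:
  assumes [measurable]: "S \<in> sets (borel \<Otimes>\<^sub>M borel)"
  shows "measure M {\<omega> \<in> space M. (Z \<omega>, X \<omega>) \<in> S}
    = (\<integral>\<omega>. measure (cond_law (X \<omega>)) {t. (t, X \<omega>) \<in> S} \<partial>M)"
proof -
  have "emeasure (cond_law x) {t. (t, x) \<in> S} = ennreal (measure (cond_law x) {t. (t, x) \<in> S})" for x
    by (rule finite_measure.emeasure_eq_measure[OF prob_space.finite_measure[OF prob_space_cond_law]])
  moreover have "(\<lambda>x. measure (cond_law x) {t. (t, x) \<in> S}) \<in> borel_measurable borel"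
    unfolding measure_def by (intro borel_measurable_enn2real measurable_emeasure_cond_law_section) simp
  ultimately show ?thesis
    unfolding measure_def[of M] emeasure_joint[OF assms]
    by (subst integral_eq_nn_integral) (auto intro: measurable_compose[OF X_measurable])
qed

lemma AE_cond_cdf_gt_0_lt_1:
  "AE \<omega> in M. 0 < cond_cdf (Z \<omega>) (X \<omega>) \<and> cond_cdf (Z \<omega>) (X \<omega>) < 1"
  using real_distribution.AE_cdf_pos[OF real_distribution_cond_law cond_law_atomless]
    real_distribution.AE_cdf_less_1[OF real_distribution_cond_law cond_law_atomless]
  by (intro AE_joint) (measurable, simp add: cond_cdf_def)

lemma AE_less_imp_cond_cdf_less:
  "AE \<omega> in M. \<forall>r < Z \<omega>. cond_cdf r (X \<omega>) < cond_cdf (Z \<omega>) (X \<omega>)"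
proof -
  have "AE \<omega> in M. r < Z \<omega> \<longrightarrow> cond_cdf r (X \<omega>) < cond_cdf (Z \<omega>) (X \<omega>)" for r
    using real_distribution.AE_less_imp_cdf_less[OF real_distribution_cond_law cond_law_atomless]
    by (intro AE_joint) (measurable, simp add: cond_cdf_def)
  then have "AE \<omega> in M. \<forall>r \<in> \<rat>. r < Z \<omega> \<longrightarrow> cond_cdf r (X \<omega>) < cond_cdf (Z \<omega>) (X \<omega>)"
    by (rule AE_ball_countable'[OF _ countable_rat])
  then show ?thesis
  proof eventually_elim
    case (elim \<omega>)
    show ?case
    proof (intro allI impI)
      fix r assume "r < Z \<omega>"
      then obtain q where "q \<in> \<rat>" "r < q" "q < Z \<omega>"
        using Rats_dense_in_real by blast
      then have "cond_cdf r (X \<omega>) \<le> cond_cdf q (X \<omega>)"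
        using finite_borel_measure.cdf_nondecreasing[OF
            real_distribution.finite_borel_measure_M[OF real_distribution_cond_law]]
        by (simp add: cond_cdf_def)
      also have "\<dots> < cond_cdf (Z \<omega>) (X \<omega>)"
        using elim \<open>q \<in> \<rat>\<close> \<open>q < Z \<omega>\<close> by blast
      finally show "cond_cdf r (X \<omega>) < cond_cdf (Z \<omega>) (X \<omega>)" .
    qed
  qed
qed

definition quantile_transform :: "(real \<Rightarrow> 'b \<Rightarrow> real) \<Rightarrow> 'a \<Rightarrow> real" where
  "quantile_transform Q \<omega> = cond_quantile Q (cond_cdf (Z \<omega>) (X \<omega>)) (X \<omega>)"

context
  fixes Q :: "real \<Rightarrow> 'b \<Rightarrow> real"
  assumes Q: "is_cond_cdf Q borel"
begin

lemma measurable_quantile_transform[measurable]: "quantile_transform Q \<in> borel_measurable M"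
  unfolding quantile_transform_def by (rule measurable_cond_quantile[OF Q]) measurable

lemma AE_quantile_transform_le_iff:
  "AE \<omega> in M. \<forall>z. quantile_transform Q \<omega> \<le> z \<longleftrightarrow> cond_cdf (Z \<omega>) (X \<omega>) \<le> Q z (X \<omega>)"
  using AE_cond_cdf_gt_0_lt_1
  by eventually_elim
     (simp add: quantile_transform_def cond_quantile_le_iff[OF Q] is_cond_cdf_ex_ge[OF Q])

lemma measure_quantile_transform_le:
  assumes [measurable]: "B \<in> sets borel"
  shows "measure M {\<omega> \<in> space M. quantile_transform Q \<omega> \<le> z \<and> X \<omega> \<in> B}
    = (\<integral>\<omega>. indicator B (X \<omega>) * Q z (X \<omega>) \<partial>M)"
proof -
  have [measurable]: "(\<lambda>x. Q z x) \<in> borel_measurable borel"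
    using Q by (simp add: is_cond_cdf_def)
  let ?S = "{(t, x). cond_cdf t x \<le> Q z x \<and> x \<in> B}"
  have S: "?S \<in> sets (borel \<Otimes>\<^sub>M borel)"
    by (rule sets_Collect_pair_borel) measurable
  have "measure (cond_law x) {t. (t, x) \<in> ?S} = indicator B x * Q z x" for x
    using real_distribution.measure_cdf_le[OF real_distribution_cond_law cond_law_atomless]
      is_cond_cdf_bounded[OF Q]
    by (cases "x \<in> B") (simp_all add: cond_cdf_def)
  then have "measure M {\<omega> \<in> space M. (Z \<omega>, X \<omega>) \<in> ?S} = (\<integral>\<omega>. indicator B (X \<omega>) * Q z (X \<omega>) \<partial>M)"
    unfolding measure_joint[OF S] by simp
  moreover have "measure M {\<omega> \<in> space M. quantile_transform Q \<omega> \<le> z \<and> X \<omega> \<in> B}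
      = measure M {\<omega> \<in> space M. (Z \<omega>, X \<omega>) \<in> ?S}"
    using AE_quantile_transform_le_iff by (intro measure_eq_AE) (auto, measurable)
  ultimately show ?thesis by simp
qed

lemma AE_instrument_le_quantile_transform:
  assumes "AE \<omega> in M. \<forall>z. Q z (X \<omega>) \<le> cond_cdf z (X \<omega>)"
  shows "AE \<omega> in M. Z \<omega> \<le> quantile_transform Q \<omega>"
  using assms AE_quantile_transform_le_iff AE_less_imp_cond_cdf_less
proof eventually_elim
  case (elim \<omega>)
  show ?case
  proof (rule ccontr)
    assume "\<not> Z \<omega> \<le> quantile_transform Q \<omega>"
    then have "cond_cdf (quantile_transform Q \<omega>) (X \<omega>) < cond_cdf (Z \<omega>) (X \<omega>)"
      using elim(3) by simp
    also have "\<dots> \<le> Q (quantile_transform Q \<omega>) (X \<omega>)"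
      using elim(2) by blast
    also have "\<dots> \<le> cond_cdf (quantile_transform Q \<omega>) (X \<omega>)"
      using elim(1) by blast
    finally show False by simp
  qed
qed

lemma AE_quantile_transform_le_instrument:
  assumes "AE \<omega> in M. \<forall>z. cond_cdf z (X \<omega>) \<le> Q z (X \<omega>)"
  shows "AE \<omega> in M. quantile_transform Q \<omega> \<le> Z \<omega>"
  using assms AE_quantile_transform_le_iff by eventually_elim blast

end

end

lemma AE_mono_response:
  fixes R :: "'c::order \<Rightarrow> 'a \<Rightarrow> 'b::preorder"
  assumes "AE \<omega> in M. \<forall>z z'. z < z' \<longrightarrow> R z \<omega> \<le> R z' \<omega>"
    and "AE \<omega> in M. V \<omega> \<le> W \<omega>"
  shows "AE \<omega> in M. R (V \<omega>) \<omega> \<le> R (W \<omega>) \<omega>"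
  using assms by eventually_elim (metis order.order_iff_strict order_refl)

theorem proposition1:
  fixes M :: "'a measure"
    and X :: "'a \<Rightarrow> real ^ 'd"
    and Z :: "'a \<Rightarrow> real"
    and A :: "'a \<Rightarrow> real"
    and Apot :: "real \<Rightarrow> 'a \<Rightarrow> real"
    and \<pi> :: "real \<Rightarrow> real ^ 'd \<Rightarrow> real"
    and Pi_Z :: "real \<Rightarrow> real ^ 'd \<Rightarrow> real"
    and Q :: "real \<Rightarrow> real ^ 'd \<Rightarrow> real"
    and ZQ :: "'a \<Rightarrow> real"
  assumes P: "prob_space M"
    and X_meas: "X \<in> borel_measurable M"
    and Z_meas: "Z \<in> borel_measurable M"
    and A_meas: "A \<in> borel_measurable M"
    \<comment> \<open>conditional density \<pi>(z | x) of Z given X\<close>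
    and dens_meas: "(\<lambda>(t, x). \<pi> t x) \<in> borel_measurable (borel \<Otimes>\<^sub>M borel)"
    and dens_nonneg: "\<And>t x. 0 \<le> \<pi> t x"
    and dens_norm: "\<And>x. (\<integral>\<^sup>+ t. ennreal (\<pi> t x) \<partial>lborel) = 1"
    and dens_cond: "\<And>C B. C \<in> sets borel \<Longrightarrow> B \<in> sets borel \<Longrightarrow>
        emeasure M {\<omega> \<in> space M. Z \<omega> \<in> C \<and> X \<omega> \<in> B}
        = (\<integral>\<^sup>+ \<omega>. indicator B (X \<omega>) *
              (\<integral>\<^sup>+ t. indicator C t * ennreal (\<pi> t (X \<omega>)) \<partial>lborel) \<partial>M)"
    \<comment> \<open>conditional CDF Pi_Z(z | x) of Z given X\<close>
    and Pi_def: "\<And>z x. Pi_Z z x = (LBINT t:{..z}. \<pi> t x)"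
    \<comment> \<open>binary treatment, potential treatments, consistency\<close>
    and A_bin: "\<And>\<omega>. \<omega> \<in> space M \<Longrightarrow> A \<omega> \<in> {0, 1}"
    and Apot_bin: "\<And>z \<omega>. \<omega> \<in> space M \<Longrightarrow> Apot z \<omega> \<in> {0, 1}"
    and consistency: "AE \<omega> in M. Apot (Z \<omega>) \<omega> = A \<omega>"
    \<comment> \<open>target conditional CDF Q and the shifted instrument Z_Q\<close>
    and Q_cdf: "is_cond_cdf Q borel"
    and ZQ_def: "ZQ = (\<lambda>\<omega>. cond_quantile Q (Pi_Z (Z \<omega>) (X \<omega>)) (X \<omega>))"
  shows "(\<forall>z. \<forall>B \<in> sets borel.
            measure M {\<omega> \<in> space M. ZQ \<omega> \<le> z \<and> X \<omega> \<in> B}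
            = (\<integral>\<omega>. indicator B (X \<omega>) * Q z (X \<omega>) \<partial>M))
      \<and> ((AE \<omega> in M. \<forall>z z'. z < z' \<longrightarrow> Apot z \<omega> \<le> Apot z' \<omega>) \<longrightarrow>
           (AE \<omega> in M. \<forall>z. Q z (X \<omega>) \<le> Pi_Z z (X \<omega>)) \<longrightarrow>
           (AE \<omega> in M. A \<omega> \<le> Apot (ZQ \<omega>) \<omega>))
      \<and> ((AE \<omega> in M. \<forall>z z'. z < z' \<longrightarrow> Apot z \<omega> \<le> Apot z' \<omega>) \<longrightarrow>
           (AE \<omega> in M. \<forall>z. Pi_Z z (X \<omega>) \<le> Q z (X \<omega>)) \<longrightarrow>
           (AE \<omega> in M. Apot (ZQ \<omega>) \<omega> \<le> A \<omega>))"
proof -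
  interpret conditional_density M X Z \<pi>
    using P X_meas Z_meas dens_meas dens_nonneg dens_norm dens_cond
    by (simp add: conditional_density_def conditional_density_axioms_def)
  have Pi_Z_eq: "Pi_Z = cond_cdf"
    by (simp add: fun_eq_iff Pi_def cond_cdf_eq_set_integral)
  have ZQ_eq: "ZQ = quantile_transform Q"
    by (simp add: fun_eq_iff ZQ_def quantile_transform_def Pi_Z_eq)
  show ?thesis
    unfolding Pi_Z_eq ZQ_eq
  proof (intro conjI impI allI ballI)
    show "measure M {\<omega> \<in> space M. quantile_transform Q \<omega> \<le> z \<and> X \<omega> \<in> B}
        = (\<integral>\<omega>. indicator B (X \<omega>) * Q z (X \<omega>) \<partial>M)" if "B \<in> sets borel" for z B
      using measure_quantile_transform_le[OF Q_cdf that] .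
  next
    assume mono: "AE \<omega> in M. \<forall>z z'. z < z' \<longrightarrow> Apot z \<omega> \<le> Apot z' \<omega>"
      and "AE \<omega> in M. \<forall>z. Q z (X \<omega>) \<le> cond_cdf z (X \<omega>)"
    from AE_mono_response[OF mono AE_instrument_le_quantile_transform[OF Q_cdf this(2)]] consistency
    show "AE \<omega> in M. A \<omega> \<le> Apot (quantile_transform Q \<omega>) \<omega>"
      by eventually_elim simp
  next
    assume mono: "AE \<omega> in M. \<forall>z z'. z < z' \<longrightarrow> Apot z \<omega> \<le> Apot z' \<omega>"
      and "AE \<omega> in M. \<forall>z. cond_cdf z (X \<omega>) \<le> Q z (X \<omega>)"
    from AE_mono_response[OF mono AE_quantile_transform_le_instrument[OF Q_cdf this(2)]] consistency
    show "AE \<omega> in M. Apot (quantile_transform Q \<omega>) \<omega> \<le> A \<omega>"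
      by eventually_elim simp
  qed
qed

end
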